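(* In the setting of the context, fix a feasible basis and distinct integers $r,s$ with $0\le r,s\le d$, and let $\alpha_i=u_i(\theta_r)$ for $0\le i\le d$. The following are equivalent: (i) in $\Delta$, vertex $r$ is adjacent to vertex $s$ and to no other vertex; (ii) for $0\le i\le d$, $$c_i\theta^*_{i-1}\alpha_{i-1}+a_i\theta^*_i\alpha_i+b_i\theta^*_{i+1}\alpha_{i+1}-\theta_r\theta^*_i\alpha_i=(\theta_s-\theta_r)(\theta^*_i-a^*_r)\alpha_i$$ (terms with $c_0=0$ or $b_d=0$ vanish, so $\alpha_{-1},\alpha_{d+1},\theta^*_{-1},\theta^*_{d+1}$ are irrelevant), and there exists $i\in\{0,\dots,d\}$ with $(\theta_s-\theta_r)(\theta^*_i-a^*_r)\alpha_i\ne0$.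
   Context: Let $\mathbb F$ be a field, $d\ge1$, $V$ an $\mathbb F$-vector space of dimension $d+1$, $\mathcal A=\mathrm{End}(V)$ with identity $I$. Let $E^*_0,\dots,E^*_d\in\mathcal A$ satisfy $E^*_iE^*_j=\delta_{i,j}E^*_i$, $\mathrm{rank}(E^*_i)=1$. Let $A\in\mathcal A$ satisfy $E^*_iAE^*_j=0$ if $|i-j|>1$ and $\neq0$ if $|i-j|=1$. Assume $A$ has $d+1$ distinct eigenvalues $\theta_0,\dots,\theta_d\in\mathbb F$ with primitive idempotents $E_i=\prod_{j\ne i}\frac{A-\theta_jI}{\theta_i-\theta_j}$. Let $\theta^*_i\in\mathbb F$, $A^*=\sum_i\theta^*_iE^*_i$, $a^*_i=\mathrm{tr}(E_iA^* )$. Let $\Delta$ be the graph on $\{0,\dots,d\}$ with $i\sim j$ iff $i\ne j$ and $E_iA^*E_j\ne0$. A basis $v_0,\dots,v_d$ of $V$ is feasible if $v_i\in E^*_iV$ for all $i$; then $Av_i=b_{i-1}v_{i-1}+a_iv_i+c_{i+1}v_{i+1}$ ($v_{-1}=v_{d+1}=0$), with $a_i=\mathrm{tr}(E^*_iA)$, nonzero $b_0,\dots,b_{d-1}$, $c_1,\dots,c_d$, and $b_d=c_0=0$. Define $u_0,\dots,u_{d+1}\in\mathbb F[\lambda]$ by $u_{-1}=0$, $u_0=1$, $\lambda u_i=c_iu_{i-1}+a_iu_i+b_iu_{i+1}$ $(0\le i\le d-1)$, $\lambda u_d=c_du_{d-1}+a_du_d+u_{d+1}/(b_0\cdots b_{d-1})$.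 *)

theory Defs
  imports "Jordan_Normal_Form.Matrix" "Jordan_Normal_Form.DL_Rank" "Jordan_Normal_Form.Char_Poly"
    "HOL-Computational_Algebra.Polynomial"
begin

definition mtrace :: "'a::comm_ring_1 mat \<Rightarrow> 'a" where
  "mtrace M = (\<Sum>i<dim_row M. M $$ (i, i))"

definition prim_idem :: "nat \<Rightarrow> nat \<Rightarrow> 'a::field mat \<Rightarrow> (nat \<Rightarrow> 'a) \<Rightarrow> nat \<Rightarrow> 'a mat" where
  "prim_idem n d A th i =
     foldr (\<lambda>j M. ((1 / (th i - th j)) \<cdot>\<^sub>m (A - th j \<cdot>\<^sub>m 1\<^sub>m n)) * M)
           (filter (\<lambda>j. j \<noteq> i) [0..<Suc d]) (1\<^sub>m n)"

definition uscale :: "(nat \<Rightarrow> 'a::field) \<Rightarrow> nat \<Rightarrow> nat \<Rightarrow> 'a poly \<Rightarrow> 'a poly" where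
  "uscale b d i p = (if i < d then smult (inverse (b i)) p
                     else if i = d then smult (\<Prod>j<d. b j) p else 0)"

text \<open>The polynomials u_0, ..., u_{d+1} (values beyond d+1 are irrelevant and set to 0).
  u_{-1} = 0, u_0 = 1,
  lambda u_i = c_i u_{i-1} + a_i u_i + b_i u_{i+1}  (0 <= i <= d-1),
  lambda u_d = c_d u_{d-1} + a_d u_d + u_{d+1}/(b_0 ... b_{d-1}).\<close>
fun upol :: "(nat \<Rightarrow> 'a::field) \<Rightarrow> (nat \<Rightarrow> 'a) \<Rightarrow> (nat \<Rightarrow> 'a) \<Rightarrow> nat \<Rightarrow> nat \<Rightarrow> 'a poly" where
  "upol a b c d 0 = 1"
| "upol a b c d (Suc 0) = uscale b d 0 [:- a 0, 1:]"
| "upol a b c d (Suc (Suc i)) =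
     uscale b d (Suc i) ([:- a (Suc i), 1:] * upol a b c d (Suc i) - smult (c (Suc i)) (upol a b c d i))"

end

theory Submission
  imports Defs
begin

text \<open>
  In the feasible basis (the columns of \<open>F\<close>) the map \<open>A\<close> becomes the tridiagonal matrix \<open>T\<close> with
  entries \<open>c\<^sub>i, a\<^sub>i, b\<^sub>i\<close>, and \<open>A\<^sup>*\<close> the diagonal matrix of the \<open>\<theta>\<^sup>*\<^sub>i\<close>. The three-term recurrence
  of the \<open>u\<^sub>i\<close> says that the vectors \<open>(u\<^sub>i(\<theta>\<^sub>j))\<^sub>i\<close>, the columns of \<open>U\<close>, are eigenvectors of \<open>T\<close>,
  so \<open>F U\<close> is an eigenbasis of \<open>A\<close> and every \<open>E\<^sub>k\<close> is the projection onto its \<open>k\<close>-th vector.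
  Hence, with \<open>N = U\<^sup>-\<^sup>1 diag(\<theta>\<^sup>*) U\<close> the matrix of \<open>A\<^sup>*\<close> in this eigenbasis, \<open>E\<^sub>i A\<^sup>* E\<^sub>j \<noteq> 0\<close>
  iff \<open>N\<^sub>i\<^sub>j \<noteq> 0\<close>, and \<open>a\<^sup>*\<^sub>r = N\<^sub>r\<^sub>r\<close>. As \<open>T\<close> is symmetrised by a diagonal matrix \<open>K\<close> (all \<open>b\<^sub>i, c\<^sub>i\<close>
  are nonzero), \<open>U\<^sup>T K U\<close> is an invertible diagonal matrix, which makes the zero pattern of \<open>N\<close>
  symmetric. Finally, read in coordinates with respect to \<open>U\<close>, condition (ii) states
  \<open>(\<theta>\<^sub>k - \<theta>\<^sub>r) N\<^sub>k\<^sub>r = (\<theta>\<^sub>s - \<theta>\<^sub>r) (N\<^sub>k\<^sub>r - \<delta>\<^sub>k\<^sub>r N\<^sub>r\<^sub>r)\<close> for all \<open>k\<close>, together with \<open>N\<^sub>k\<^sub>r \<noteq> 0\<close> for some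
  \<open>k \<noteq> r\<close>; since the \<open>\<theta>\<^sub>k\<close> are distinct, this says exactly that column \<open>r\<close> of \<open>N\<close> vanishes
  off the diagonal except at \<open>s\<close>, where it does not.
\<close>

lemma mtrace_mult_comm:
  fixes X Y :: "'a::comm_ring_1 mat"
  assumes "X \<in> carrier_mat n n" "Y \<in> carrier_mat n n"
  shows "mtrace (X * Y) = mtrace (Y * X)"
proof -
  have "mtrace (X * Y) = (\<Sum>i<n. \<Sum>k<n. X $$ (i,k) * Y $$ (k,i))"
    using assms unfolding mtrace_def
    by (auto simp: scalar_prod_def intro!: sum.cong atLeast0LessThan[symmetric])
  also have "\<dots> = (\<Sum>k<n. \<Sum>i<n. Y $$ (k,i) * X $$ (i,k))"
    by (subst sum.swap) (simp add: mult.commute)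
  also have "\<dots> = mtrace (Y * X)"
    using assms unfolding mtrace_def
    by (auto simp: scalar_prod_def intro!: sum.cong atLeast0LessThan)
  finally show ?thesis .
qed

lemma smult_mat_mult_vec:
  fixes M :: "'a::comm_ring_1 mat"
  assumes "M \<in> carrier_mat n m" "x \<in> carrier_vec m"
  shows "(c \<cdot>\<^sub>m M) *\<^sub>v x = c \<cdot>\<^sub>v (M *\<^sub>v x)"
  using assms by (auto intro!: eq_vecI simp: scalar_prod_def sum_distrib_left ac_simps)

lemma zero_smult_vec [simp]:
  fixes v :: "'a::semiring_0 vec"
  shows "v \<in> carrier_vec n \<Longrightarrow> 0 \<cdot>\<^sub>v v = 0\<^sub>v n"
  by (intro eq_vecI) auto

lemma mult_mat_vec_zero:
  fixes M :: "'a::semiring_0 mat"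
  shows "M \<in> carrier_mat m n \<Longrightarrow> M *\<^sub>v 0\<^sub>v n = 0\<^sub>v m"
  by (intro eq_vecI) auto

lemma smult_vec_eq_zero_iff:
  fixes v :: "'a::idom vec"
  assumes "v \<in> carrier_vec n"
  shows "c \<cdot>\<^sub>v v = 0\<^sub>v n \<longleftrightarrow> c = 0 \<or> v = 0\<^sub>v n"
proof
  assume cv: "c \<cdot>\<^sub>v v = 0\<^sub>v n"
  show "c = 0 \<or> v = 0\<^sub>v n"
  proof (rule disjCI)
    assume "v \<noteq> 0\<^sub>v n"
    then obtain i where "i < n" "v $ i \<noteq> 0" using assms by (auto simp: vec_eq_iff)
    then show "c = 0" using arg_cong[OF cv, of "\<lambda>w. w $ i"] assms by simp
  qed
qed (use assms in auto)

lemma mult_mat_vec_injective: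
  fixes U Z :: "'a::semiring_1 mat"
  assumes "Z \<in> carrier_mat n n" "U \<in> carrier_mat n n" "Z * U = 1\<^sub>m n"
    and "v \<in> carrier_vec n" "w \<in> carrier_vec n"
  shows "U *\<^sub>v v = U *\<^sub>v w \<longleftrightarrow> v = w"
  using assoc_mult_mat_vec[of Z n n U n v] assoc_mult_mat_vec[of Z n n U n w] assms by force

lemma mult_mat_vec_eq_zero_iff:
  fixes U Z :: "'a::semiring_1 mat"
  assumes "Z \<in> carrier_mat n n" "U \<in> carrier_mat n n" "Z * U = 1\<^sub>m n" "v \<in> carrier_vec n"
  shows "U *\<^sub>v v = 0\<^sub>v n \<longleftrightarrow> v = 0\<^sub>v n"
  using mult_mat_vec_injective[OF assms zero_carrier_vec] mult_mat_vec_zero[OF assms(2)] by simp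

lemma mat_inverse_if_kernel_trivial:
  fixes X :: "'a::field mat"
  assumes X: "X \<in> carrier_mat n n"
    and ker: "\<And>y. y \<in> carrier_vec n \<Longrightarrow> X *\<^sub>v y = 0\<^sub>v n \<Longrightarrow> y = 0\<^sub>v n"
  obtains Y where "Y \<in> carrier_mat n n" "Y * X = 1\<^sub>m n" "X * Y = 1\<^sub>m n"
proof -
  have "det X \<noteq> 0" using det_0_iff_vec_prod_zero[OF X] ker by auto
  then obtain Y where Y: "Y \<in> carrier_mat n n" "Y * X = 1\<^sub>m n"
    using det_non_zero_imp_unit[OF X, of "()"] unfolding Units_def ring_mat_def by auto
  then show ?thesis using that mat_mult_left_right_inverse[OF Y(1) X Y(2)] by blast
qed

lemma mat_eq_conj_if_mult_eq:
  fixes X C Y C' :: "'a::semiring_1 mat"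
  assumes X: "X \<in> carrier_mat n n" and C: "C \<in> carrier_mat n n" and Y: "Y \<in> carrier_mat n n"
    and C': "C' \<in> carrier_mat n n" and inv: "C * C' = 1\<^sub>m n" and XC: "X * C = C * Y"
  shows "X = C * Y * C'"
proof -
  have "X = X * (C * C')" using right_mult_one_mat[OF X] inv by simp
  also have "\<dots> = C * Y * C'" using X C C' by (simp add: assoc_mult_mat[symmetric] XC)
  finally show ?thesis .
qed

lemma conj_eq_zero_iff:
  fixes P Q M :: "'a::semiring_1 mat"
  assumes P: "P \<in> carrier_mat n n" and Q: "Q \<in> carrier_mat n n" and M: "M \<in> carrier_mat n n"
    and QP: "Q * P = 1\<^sub>m n"
  shows "P * M * Q = 0\<^sub>m n n \<longleftrightarrow> M = 0\<^sub>m n n"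
proof
  assume "P * M * Q = 0\<^sub>m n n"
  then have "Q * (P * M * Q) * P = 0\<^sub>m n n" using P Q by simp
  moreover have "Q * (P * M * Q) * P = M"
    using P Q M by (simp add: assoc_mult_mat[of _ n n _ n _ n] QP flip: assoc_mult_mat[of Q n n P n _ n])
  ultimately show "M = 0\<^sub>m n n" by simp
qed (use P Q in simp)

lemma mult_mat_diag_iff_cols:
  fixes X C :: "'a::comm_ring_1 mat"
  assumes X: "X \<in> carrier_mat n n" and C: "C \<in> carrier_mat n n"
  shows "X * C = C * mat_diag n f \<longleftrightarrow> (\<forall>j<n. X *\<^sub>v col C j = f j \<cdot>\<^sub>v col C j)"
proof -
  have col_CD: "col (C * mat_diag n f) j = f j \<cdot>\<^sub>v col C j" if "j < n" for j
    using that C by (auto simp: mat_diag_mult_right[OF C] mult.commute intro!: eq_vecI)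
  show ?thesis
  proof
    assume "X * C = C * mat_diag n f"
    then show "\<forall>j<n. X *\<^sub>v col C j = f j \<cdot>\<^sub>v col C j"
      using X C col_CD by (metis col_mult2)
  next
    assume cols: "\<forall>j<n. X *\<^sub>v col C j = f j \<cdot>\<^sub>v col C j"
    show "X * C = C * mat_diag n f"
    proof (rule mat_col_eqI)
      fix j assume "j < dim_col (C * mat_diag n f)"
      then have j: "j < n" by (simp add: mat_diag_def)
      show "col (X * C) j = col (C * mat_diag n f) j"
        unfolding col_mult2[OF X C j] col_CD[OF j] using cols j by simp
    qed (use X C in \<open>simp_all add: mat_diag_def\<close>)
  qed
qed

lemma transpose_mat_diag [simp]: "transpose_mat (mat_diag n f) = mat_diag n f"
  by (auto simp: mat_diag_def)

lemma det_mat_diag: "det (mat_diag n f :: 'a::comm_ring_1 mat) = (\<Prod>i<n. f i)"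
  by (subst det_upper_triangular[of _ n])
     (auto simp: upper_triangular_def mat_diag_def prod_list_diag_prod atLeast0LessThan)

lemma mat_diag_if_commutes_with_distinct_diag:
  fixes G :: "'a::field mat"
  assumes G: "G \<in> carrier_mat n n" and comm: "mat_diag n \<theta> * G = G * mat_diag n \<theta>"
    and inj: "inj_on \<theta> {..<n}"
  shows "G = mat_diag n (\<lambda>i. G $$ (i, i))"
proof (rule eq_matI)
  fix i j assume "i < dim_row (mat_diag n (\<lambda>i. G $$ (i, i)))" "j < dim_col (mat_diag n (\<lambda>i. G $$ (i, i)))"
  then have i: "i < n" and j: "j < n" by (simp_all add: mat_diag_def)
  have "\<theta> i * G $$ (i, j) = G $$ (i, j) * \<theta> j"
    using arg_cong[OF comm, of "\<lambda>M. M $$ (i, j)"] i j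
    by (simp add: mat_diag_mult_left[OF G] mat_diag_mult_right[OF G])
  then have "i \<noteq> j \<Longrightarrow> G $$ (i, j) = 0"
    using inj_onD[OF inj, of i j] i j by (auto simp: mult.commute)
  then show "G $$ (i, j) = mat_diag n (\<lambda>i. G $$ (i, i)) $$ (i, j)"
    using i j by (auto simp: mat_diag_def)
qed (use G in \<open>auto simp: mat_diag_def\<close>)

definition unit_diag_mat :: "nat \<Rightarrow> nat \<Rightarrow> 'a::zero_neq_one mat" where
  "unit_diag_mat n k = mat_diag n (\<lambda>i. if i = k then 1 else 0)"

lemma unit_diag_mat_carrier [simp]: "unit_diag_mat n k \<in> carrier_mat n n"
  by (simp add: unit_diag_mat_def)

lemma unit_diag_mat_dim [simp]: "dim_row (unit_diag_mat n k) = n" "dim_col (unit_diag_mat n k) = n"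
  by (simp_all add: unit_diag_mat_def mat_diag_def)

lemma unit_diag_sandwich_index:
  fixes M :: "'a::semiring_1 mat"
  assumes "M \<in> carrier_mat n n" "p < n" "q < n"
  shows "(unit_diag_mat n i * M * unit_diag_mat n j) $$ (p, q) = (if p = i \<and> q = j then M $$ (i, j) else 0)"
  using assms unfolding unit_diag_mat_def
  by (simp add: mat_diag_mult_left[OF assms(1)] mat_diag_mult_right[of _ n n])

lemma unit_diag_sandwich_eq_zero_iff:
  fixes M :: "'a::semiring_1 mat"
  assumes "M \<in> carrier_mat n n" "i < n" "j < n"
  shows "unit_diag_mat n i * M * unit_diag_mat n j = 0\<^sub>m n n \<longleftrightarrow> M $$ (i, j) = 0"
proof
  assume "unit_diag_mat n i * M * unit_diag_mat n j = 0\<^sub>m n n"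
  then show "M $$ (i, j) = 0"
    using unit_diag_sandwich_index[OF assms(1,2,3), of i j] assms by simp
next
  assume "M $$ (i, j) = 0"
  then show "unit_diag_mat n i * M * unit_diag_mat n j = 0\<^sub>m n n"
    using unit_diag_sandwich_index[OF assms(1)] assms by (intro eq_matI) auto
qed

lemma mtrace_unit_diag_mult:
  fixes M :: "'a::comm_ring_1 mat"
  assumes "M \<in> carrier_mat n n" "i < n"
  shows "mtrace (unit_diag_mat n i * M) = M $$ (i, i)"
  using assms unfolding mtrace_def unit_diag_mat_def
  by (simp add: mat_diag_mult_left[OF assms(1)] if_distrib if_distribR cong: if_cong)

lemma mult_unit_diag_mult_vec:
  fixes C :: "'a::comm_ring_1 mat"
  assumes "C \<in> carrier_mat m n" "y \<in> carrier_vec n" "k < n"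
  shows "(C * unit_diag_mat n k) *\<^sub>v y = y $ k \<cdot>\<^sub>v col C k"
  using assms unfolding unit_diag_mat_def
  by (auto simp: mat_diag_mult_right scalar_prod_def if_distrib if_distribR cong: if_cong)

lemma conj_unit_diag_sandwich:
  fixes P Q X :: "'a::field mat"
  assumes P: "P \<in> carrier_mat n n" and Q: "Q \<in> carrier_mat n n" and X: "X \<in> carrier_mat n n"
    and QP: "Q * P = 1\<^sub>m n"
  shows "P * unit_diag_mat n i * Q * (P * X * Q) * (P * unit_diag_mat n j * Q)
    = P * (unit_diag_mat n i * X * unit_diag_mat n j) * Q"
proof -
  interpret matrix_ring n "TYPE('a)" .
  have QPM: "Q * (P * M) = M" if "M \<in> carrier_mat n n" for M
    using that P Q by (simp flip: m_assoc add: QP)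
  show ?thesis using P Q X by (simp add: m_assoc QPM)
qed

lemma conj_unit_diag_sandwich_eq_zero_iff:
  fixes P Q X :: "'a::field mat"
  assumes P: "P \<in> carrier_mat n n" and Q: "Q \<in> carrier_mat n n" and X: "X \<in> carrier_mat n n"
    and QP: "Q * P = 1\<^sub>m n" and i: "i < n" and j: "j < n"
  shows "P * unit_diag_mat n i * Q * (P * X * Q) * (P * unit_diag_mat n j * Q) = 0\<^sub>m n n
    \<longleftrightarrow> X $$ (i, j) = 0"
proof -
  have DXD: "unit_diag_mat n i * X * unit_diag_mat n j \<in> carrier_mat n n"
    using X by (auto intro!: mult_carrier_mat)
  show ?thesis
    unfolding conj_unit_diag_sandwich[OF P Q X QP] conj_eq_zero_iff[OF P Q DXD QP]
    by (rule unit_diag_sandwich_eq_zero_iff[OF X i j])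
qed

lemma mtrace_conj_unit_diag_mult:
  fixes P Q X :: "'a::field mat"
  assumes P: "P \<in> carrier_mat n n" and Q: "Q \<in> carrier_mat n n" and X: "X \<in> carrier_mat n n"
    and QP: "Q * P = 1\<^sub>m n" and i: "i < n"
  shows "mtrace (P * unit_diag_mat n i * Q * (P * X * Q)) = X $$ (i, i)"
proof -
  interpret matrix_ring n "TYPE('a)" .
  have "P * unit_diag_mat n i * Q * (P * X * Q) = P * (unit_diag_mat n i * X * Q)"
    using P Q X by (simp add: m_assoc flip: m_assoc[of Q P] add: QP)
  then have "mtrace (P * unit_diag_mat n i * Q * (P * X * Q)) = mtrace (unit_diag_mat n i * X * Q * P)"
    using P Q X by (simp add: mtrace_mult_comm[of P n])
  also have "\<dots> = X $$ (i, i)"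
    using P Q X i by (simp add: m_assoc QP mtrace_unit_diag_mult)
  finally show ?thesis .
qed

section \<open>Primitive idempotents\<close>

lemma foldr_mult_mat_carrier:
  assumes "\<And>j. j \<in> set xs \<Longrightarrow> B j \<in> carrier_mat n n"
  shows "foldr (\<lambda>j M. B j * M) xs (1\<^sub>m n) \<in> carrier_mat n n"
  using assms by (induction xs) (auto intro!: mult_carrier_mat)

lemma foldr_mult_mat_eigenvector:
  fixes B :: "nat \<Rightarrow> 'a::field mat"
  assumes B: "\<And>j. j \<in> set xs \<Longrightarrow> B j \<in> carrier_mat n n" and x: "x \<in> carrier_vec n"
    and ev: "\<And>j. j \<in> set xs \<Longrightarrow> B j *\<^sub>v x = \<mu> j \<cdot>\<^sub>v x"
  shows "foldr (\<lambda>j M. B j * M) xs (1\<^sub>m n) *\<^sub>v x = (\<Prod>j\<leftarrow>xs. \<mu> j) \<cdot>\<^sub>v x"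
  using assms
proof (induction xs)
  case (Cons j xs)
  let ?M = "foldr (\<lambda>j M. B j * M) xs (1\<^sub>m n)"
  have "(B j * ?M) *\<^sub>v x = B j *\<^sub>v ((\<Prod>j\<leftarrow>xs. \<mu> j) \<cdot>\<^sub>v x)"
    using Cons foldr_mult_mat_carrier[of xs B n] by (simp add: assoc_mult_mat_vec[of _ n n _ n])
  also have "\<dots> = (\<Prod>j\<leftarrow>j # xs. \<mu> j) \<cdot>\<^sub>v x"
    using Cons by (simp add: mult_mat_vec[of _ n n] smult_smult_assoc mult.commute)
  finally show ?case by simp
qed auto

lemma prim_idem_carrier [simp]:
  "X \<in> carrier_mat n n \<Longrightarrow> prim_idem n d X \<theta> k \<in> carrier_mat n n"
  unfolding prim_idem_def by (rule foldr_mult_mat_carrier) auto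

lemma prim_idem_mult_eigenvector:
  fixes X :: "'a::field mat"
  assumes X: "X \<in> carrier_mat n n" and x: "x \<in> carrier_vec n" and ev: "X *\<^sub>v x = \<theta> j \<cdot>\<^sub>v x"
    and inj: "inj_on \<theta> {..d}" and j: "j \<le> d" and k: "k \<le> d"
  shows "prim_idem n d X \<theta> k *\<^sub>v x = (if k = j then x else 0\<^sub>v n)"
proof -
  let ?xs = "filter (\<lambda>i. i \<noteq> k) [0..<Suc d]"
  let ?\<mu> = "\<lambda>i. (\<theta> j - \<theta> i) / (\<theta> k - \<theta> i)"
  have set_xs: "set ?xs = {..d} - {k}" by (auto simp del: upt_Suc)
  have "((1 / (\<theta> k - \<theta> i)) \<cdot>\<^sub>m (X - \<theta> i \<cdot>\<^sub>m 1\<^sub>m n)) *\<^sub>v x = ?\<mu> i \<cdot>\<^sub>v x" for i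
  proof -
    have "(X - \<theta> i \<cdot>\<^sub>m 1\<^sub>m n) *\<^sub>v x = X *\<^sub>v x - (\<theta> i \<cdot>\<^sub>m 1\<^sub>m n) *\<^sub>v x"
      using X x by (intro minus_mult_distrib_mat_vec) auto
    also have "\<dots> = (\<theta> j - \<theta> i) \<cdot>\<^sub>v x"
      using ev x by (auto simp: smult_mat_mult_vec[of _ n n] left_diff_distrib)
    finally show ?thesis
      using X x by (subst smult_mat_mult_vec[of _ n n]) auto
  qed
  then have "prim_idem n d X \<theta> k *\<^sub>v x = (\<Prod>i\<leftarrow>?xs. ?\<mu> i) \<cdot>\<^sub>v x"
    unfolding prim_idem_def using X x by (intro foldr_mult_mat_eigenvector) auto
  also have "(\<Prod>i\<leftarrow>?xs. ?\<mu> i) = (if k = j then 1 else 0)"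
  proof (cases "k = j")
    case True
    have "map ?\<mu> ?xs = map (\<lambda>_. 1) ?xs"
    proof (rule map_cong)
      fix i assume "i \<in> set ?xs"
      then have "\<theta> k \<noteq> \<theta> i" using k inj_onD[OF inj, of k i] unfolding set_xs by auto
      then show "?\<mu> i = 1" using True by simp
    qed simp
    then show ?thesis using True by (simp add: map_replicate_const)
  next
    case False
    then have "j \<in> set ?xs" using j unfolding set_xs by auto
    then show ?thesis using False by (auto simp: prod_list_zero_iff)
  qed
  finally show ?thesis using x by auto
qed

lemma prim_idem_mult_eigen_cols:
  fixes X C :: "'a::field mat"
  assumes X: "X \<in> carrier_mat (Suc d) (Suc d)" and C: "C \<in> carrier_mat (Suc d) (Suc d)"
    and XC: "X * C = C * mat_diag (Suc d) \<theta>" and inj: "inj_on \<theta> {..d}" and k: "k \<le> d"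
  shows "prim_idem (Suc d) d X \<theta> k * C = C * unit_diag_mat (Suc d) k"
proof -
  have "X *\<^sub>v col C j = \<theta> j \<cdot>\<^sub>v col C j" if "j < Suc d" for j
    using XC that mult_mat_diag_iff_cols[OF X C] by blast
  then have "prim_idem (Suc d) d X \<theta> k *\<^sub>v col C j = (if j = k then 1 else 0) \<cdot>\<^sub>v col C j"
    if "j < Suc d" for j
    using that C k by (auto simp: prim_idem_mult_eigenvector[OF X _ _ inj])
  then show ?thesis
    unfolding unit_diag_mat_def using mult_mat_diag_iff_cols[OF prim_idem_carrier[OF X] C] by blast
qed

lemma eigen_cols_invertible:
  fixes X C :: "'a::field mat"
  assumes X: "X \<in> carrier_mat (Suc d) (Suc d)" and C: "C \<in> carrier_mat (Suc d) (Suc d)"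
    and XC: "X * C = C * mat_diag (Suc d) \<theta>" and inj: "inj_on \<theta> {..d}"
    and nonzero: "\<And>j. j \<le> d \<Longrightarrow> col C j \<noteq> 0\<^sub>v (Suc d)"
  obtains C' where "C' \<in> carrier_mat (Suc d) (Suc d)" "C' * C = 1\<^sub>m (Suc d)" "C * C' = 1\<^sub>m (Suc d)"
proof (rule mat_inverse_if_kernel_trivial[OF C])
  fix y assume y: "y \<in> carrier_vec (Suc d)" and Cy: "C *\<^sub>v y = 0\<^sub>v (Suc d)"
  show "y = 0\<^sub>v (Suc d)"
  proof (rule eq_vecI)
    fix k assume "k < dim_vec (0\<^sub>v (Suc d) :: 'a vec)"
    then have k: "k \<le> d" by simp
    have "y $ k \<cdot>\<^sub>v col C k = (C * unit_diag_mat (Suc d) k) *\<^sub>v y"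
      using C y k by (simp add: mult_unit_diag_mult_vec)
    also have "\<dots> = prim_idem (Suc d) d X \<theta> k *\<^sub>v (C *\<^sub>v y)"
      using assoc_mult_mat_vec[OF prim_idem_carrier[OF X] C y]
      by (simp flip: prim_idem_mult_eigen_cols[OF X C XC inj k])
    also have "\<dots> = 0\<^sub>v (Suc d)"
      unfolding Cy using prim_idem_carrier[OF X] by (rule mult_mat_vec_zero)
    finally have "y $ k \<cdot>\<^sub>v col C k = 0\<^sub>v (Suc d)" .
    then show "y $ k = 0\<^sub>v (Suc d) $ k"
      using smult_vec_eq_zero_iff[OF col_carrier_vec[OF _ C]] nonzero[OF k] k by simp
  qed (use y in simp)
qed

section \<open>Conjugates of diagonal matrices\<close>

lemma gram_mat_diagonal:
  fixes T U Z :: "'a::field mat"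
  assumes T: "T \<in> carrier_mat n n" and U: "U \<in> carrier_mat n n" and Z: "Z \<in> carrier_mat n n"
    and ZU: "Z * U = 1\<^sub>m n" and TU: "T * U = U * mat_diag n \<theta>" and inj: "inj_on \<theta> {..<n}"
    and TK: "transpose_mat T * mat_diag n \<kappa> = mat_diag n \<kappa> * T"
    and \<kappa>: "\<And>i. i < n \<Longrightarrow> \<kappa> i \<noteq> 0"
  obtains g where "transpose_mat U * mat_diag n \<kappa> * U = mat_diag n g" "\<And>i. i < n \<Longrightarrow> g i \<noteq> 0"
proof -
  define K where "K = mat_diag n \<kappa>"
  define \<Lambda> where "\<Lambda> = mat_diag n \<theta>"
  define G where "G = transpose_mat U * K * U"
  have K: "K \<in> carrier_mat n n" and \<Lambda>: "\<Lambda> \<in> carrier_mat n n" and G: "G \<in> carrier_mat n n"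
    unfolding K_def \<Lambda>_def G_def using U by auto
  have \<Lambda>U: "\<Lambda> * transpose_mat U = transpose_mat U * transpose_mat T"
    using arg_cong[OF TU, of transpose_mat] T U
    by (simp add: transpose_mult[of _ n n _ n] \<Lambda>_def)
  interpret matrix_ring n "TYPE('a)" .
  have "\<Lambda> * G = (\<Lambda> * transpose_mat U) * K * U"
    unfolding G_def using U K \<Lambda> by (simp add: m_assoc)
  also have "\<dots> = transpose_mat U * (transpose_mat T * K) * U"
    unfolding \<Lambda>U using U K T by (simp add: m_assoc)
  also have "\<dots> = transpose_mat U * K * (T * U)"
    unfolding K_def TK using U T by (simp add: m_assoc)
  also have "\<dots> = G * \<Lambda>"
    unfolding TU G_def \<Lambda>_def using U K by (simp add: m_assoc)
  finally have "G = mat_diag n (\<lambda>i. G $$ (i, i))"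
    using mat_diag_if_commutes_with_distinct_diag[OF G _ inj] unfolding \<Lambda>_def by simp
  moreover have "det G \<noteq> 0"
  proof -
    have "det Z * det U = 1" using det_mult[OF Z U] ZU by simp
    then have "det U \<noteq> 0" by (metis mult_zero_right zero_neq_one)
    then show ?thesis
      unfolding G_def K_def using U \<kappa> by (simp add: det_mult[of _ n] det_transpose det_mat_diag)
  qed
  ultimately have "G $$ (i, i) \<noteq> 0" if "i < n" for i
    using that by (metis det_mat_diag lessThan_iff prod_zero_iff finite_lessThan)
  then show ?thesis using that \<open>G = mat_diag n _\<close> unfolding G_def K_def by blast
qed

text \<open>Multiplying \<open>Z * mat_diag n \<delta> * U\<close> by the invertible diagonal matrix \<open>U\<^sup>T * mat_diag n \<kappa> * U\<close>
  gives the symmetric matrix \<open>U\<^sup>T * mat_diag n (\<kappa> * \<delta>) * U\<close>.\<close>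

lemma conj_diag_zero_pattern_symmetric:
  fixes T U Z :: "'a::field mat"
  assumes T: "T \<in> carrier_mat n n" and U: "U \<in> carrier_mat n n" and Z: "Z \<in> carrier_mat n n"
    and ZU: "Z * U = 1\<^sub>m n" and TU: "T * U = U * mat_diag n \<theta>" and inj: "inj_on \<theta> {..<n}"
    and TK: "transpose_mat T * mat_diag n \<kappa> = mat_diag n \<kappa> * T"
    and \<kappa>: "\<And>i. i < n \<Longrightarrow> \<kappa> i \<noteq> 0"
    and k: "k < n" and l: "l < n"
  shows "(Z * mat_diag n \<delta> * U) $$ (k, l) = 0 \<longleftrightarrow> (Z * mat_diag n \<delta> * U) $$ (l, k) = 0"
proof -
  interpret matrix_ring n "TYPE('a)" .
  obtain g where G: "transpose_mat U * mat_diag n \<kappa> * U = mat_diag n g"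
    and g: "\<And>i. i < n \<Longrightarrow> g i \<noteq> 0"
    using gram_mat_diagonal[OF T U Z ZU TU inj TK \<kappa>] by blast
  define N where "N = Z * mat_diag n \<delta> * U"
  define H where "H = transpose_mat U * mat_diag n (\<lambda>i. \<kappa> i * \<delta> i) * U"
  have N: "N \<in> carrier_mat n n" and H: "H \<in> carrier_mat n n"
    unfolding N_def H_def using U Z by auto
  have UZ: "U * Z = 1\<^sub>m n" using mat_mult_left_right_inverse[OF Z U ZU] .
  have "mat_diag n g * N = transpose_mat U * mat_diag n \<kappa> * (U * Z) * mat_diag n \<delta> * U"
    unfolding G[symmetric] N_def using U Z by (simp add: m_assoc)
  also have "\<dots> = H"
    unfolding UZ H_def using U by (simp add: m_assoc flip: mat_diag_diag)
  finally have gN: "mat_diag n g * N = H" .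
  have "transpose_mat H = H"
    unfolding H_def using U by (simp add: transpose_mult[of _ n n _ n] m_assoc)
  then have "H $$ (k, l) = H $$ (l, k)"
    using H k l by (metis carrier_matD index_transpose_mat(1))
  then have "g k * N $$ (k, l) = g l * N $$ (l, k)"
    using k l unfolding gN[symmetric] by (simp add: mat_diag_mult_left[OF N])
  then show ?thesis
    unfolding N_def[symmetric] using g k l by auto
qed

lemma column_condition_iff:
  fixes m \<theta> :: "nat \<Rightarrow> 'a::field"
  assumes inj: "inj_on \<theta> {..<n}" and r: "r < n" and s: "s < n" and rs: "r \<noteq> s"
  shows "((\<forall>k<n. (\<theta> k - \<theta> r) * m k = (\<theta> s - \<theta> r) * (m k - (if k = r then m r else 0)))
          \<and> (\<exists>k<n. (\<theta> s - \<theta> r) * (m k - (if k = r then m r else 0)) \<noteq> 0))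
     \<longleftrightarrow> m s \<noteq> 0 \<and> (\<forall>k<n. k \<noteq> r \<longrightarrow> k \<noteq> s \<longrightarrow> m k = 0)"
proof -
  have \<theta>_eq: "\<theta> k = \<theta> l \<longleftrightarrow> k = l" if "k < n" "l < n" for k l
    using inj_onD[OF inj] that by auto
  have eq: "(\<theta> k - \<theta> r) * m k = (\<theta> s - \<theta> r) * (m k - (if k = r then m r else 0))
      \<longleftrightarrow> k = r \<or> k = s \<or> m k = 0" if "k < n" for k
  proof -
    have "(\<theta> k - \<theta> r) * m k = (\<theta> s - \<theta> r) * m k \<longleftrightarrow> (\<theta> k - \<theta> s) * m k = 0"
      by (simp add: algebra_simps)
    then show ?thesis using \<theta>_eq[OF that s] by auto
  qed
  have nonzero: "(\<theta> s - \<theta> r) * (m k - (if k = r then m r else 0)) \<noteq> 0 \<longleftrightarrow> k \<noteq> r \<and> m k \<noteq> 0" for k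
    using \<theta>_eq[OF s r] rs by auto
  show ?thesis
    using eq nonzero s rs by auto
qed

lemma conj_diag_col_coords:
  fixes T U Z :: "'a::field mat" and \<theta> \<delta> :: "nat \<Rightarrow> 'a"
  assumes T: "T \<in> carrier_mat n n" and U: "U \<in> carrier_mat n n" and Z: "Z \<in> carrier_mat n n"
    and ZU: "Z * U = 1\<^sub>m n" and TU: "T * U = U * mat_diag n \<theta>" and r: "r < n"
  defines "N \<equiv> Z * mat_diag n \<delta> * U" and "y \<equiv> mat_diag n \<delta> *\<^sub>v col U r"
  shows "y - N $$ (r, r) \<cdot>\<^sub>v col U r = U *\<^sub>v (col N r - N $$ (r, r) \<cdot>\<^sub>v unit_vec n r)"
    and "T *\<^sub>v y - \<theta> r \<cdot>\<^sub>v y = U *\<^sub>v vec n (\<lambda>k. (\<theta> k - \<theta> r) * N $$ (k, r))"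
proof -
  define m where "m = col N r"
  have N: "N \<in> carrier_mat n n" unfolding N_def using U Z by auto
  have m: "m \<in> carrier_vec n" unfolding m_def using N by auto
  have y_carrier: "y \<in> carrier_vec n"
    unfolding y_def using U r by (intro mult_mat_vec_carrier[OF mat_diag_dim]) auto
  have m_eq: "m = Z *\<^sub>v y"
    unfolding m_def N_def y_def using U Z r col_mult2[of "Z * mat_diag n \<delta>" n n U n r]
    by (simp add: assoc_mult_mat_vec[OF Z mat_diag_dim])
  have UZ: "U * Z = 1\<^sub>m n" using mat_mult_left_right_inverse[OF Z U ZU] .
  have y: "y = U *\<^sub>v m"
    unfolding m_eq assoc_mult_mat_vec[OF U Z y_carrier, symmetric] UZ using y_carrier by simp
  have "y - N $$ (r, r) \<cdot>\<^sub>v col U r = U *\<^sub>v m - N $$ (r, r) \<cdot>\<^sub>v (U *\<^sub>v unit_vec n r)"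
    unfolding y using U r by (auto intro!: eq_vecI)
  also have "\<dots> = U *\<^sub>v (m - N $$ (r, r) \<cdot>\<^sub>v unit_vec n r)"
    using U m by (simp add: mult_minus_distrib_mat_vec mult_mat_vec)
  finally show "y - N $$ (r, r) \<cdot>\<^sub>v col U r = U *\<^sub>v (col N r - N $$ (r, r) \<cdot>\<^sub>v unit_vec n r)"
    unfolding m_def .
  have "T *\<^sub>v y = U *\<^sub>v (mat_diag n \<theta> *\<^sub>v m)"
    unfolding y assoc_mult_mat_vec[OF T U m, symmetric] TU by (rule assoc_mult_mat_vec[OF U mat_diag_dim m])
  then have "T *\<^sub>v y - \<theta> r \<cdot>\<^sub>v y = U *\<^sub>v (mat_diag n \<theta> *\<^sub>v m - \<theta> r \<cdot>\<^sub>v m)"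
    unfolding y using U m mult_mat_vec_carrier[OF mat_diag_dim m]
    by (simp add: mult_minus_distrib_mat_vec[OF U] mult_mat_vec[OF U m])
  also have "mat_diag n \<theta> *\<^sub>v m - \<theta> r \<cdot>\<^sub>v m = vec n (\<lambda>k. (\<theta> k - \<theta> r) * m $ k)"
    using m by (auto simp: mat_diag_def scalar_prod_def if_distrib if_distribR left_diff_distrib cong: if_cong)
  also have "\<dots> = vec n (\<lambda>k. (\<theta> k - \<theta> r) * N $$ (k, r))"
    unfolding m_def using N r by (intro eq_vecI) auto
  finally show "T *\<^sub>v y - \<theta> r \<cdot>\<^sub>v y = U *\<^sub>v vec n (\<lambda>k. (\<theta> k - \<theta> r) * N $$ (k, r))" .
qed

lemma conj_diag_column_condition:
  fixes T U Z :: "'a::field mat" and \<theta> \<delta> :: "nat \<Rightarrow> 'a"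
  assumes T: "T \<in> carrier_mat n n" and U: "U \<in> carrier_mat n n" and Z: "Z \<in> carrier_mat n n"
    and ZU: "Z * U = 1\<^sub>m n" and TU: "T * U = U * mat_diag n \<theta>" and inj: "inj_on \<theta> {..<n}"
    and r: "r < n" and s: "s < n" and rs: "r \<noteq> s"
  defines "N \<equiv> Z * mat_diag n \<delta> * U" and "y \<equiv> mat_diag n \<delta> *\<^sub>v col U r"
  shows "(T *\<^sub>v y - \<theta> r \<cdot>\<^sub>v y = (\<theta> s - \<theta> r) \<cdot>\<^sub>v (y - N $$ (r, r) \<cdot>\<^sub>v col U r)
          \<and> (\<theta> s - \<theta> r) \<cdot>\<^sub>v (y - N $$ (r, r) \<cdot>\<^sub>v col U r) \<noteq> 0\<^sub>v n)
     \<longleftrightarrow> N $$ (s, r) \<noteq> 0 \<and> (\<forall>k<n. k \<noteq> r \<longrightarrow> k \<noteq> s \<longrightarrow> N $$ (k, r) = 0)"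
proof -
  define w where "w = col N r - N $$ (r, r) \<cdot>\<^sub>v unit_vec n r"
  have N: "N \<in> carrier_mat n n" unfolding N_def using U Z by auto
  have w: "w \<in> carrier_vec n" and sw: "(\<theta> s - \<theta> r) \<cdot>\<^sub>v w \<in> carrier_vec n"
    unfolding w_def using N by auto
  have coords: "y - N $$ (r, r) \<cdot>\<^sub>v col U r = U *\<^sub>v w"
    "T *\<^sub>v y - \<theta> r \<cdot>\<^sub>v y = U *\<^sub>v vec n (\<lambda>k. (\<theta> k - \<theta> r) * N $$ (k, r))"
    unfolding w_def N_def y_def by (rule conj_diag_col_coords[OF T U Z ZU TU r])+
  note inj_U = mult_mat_vec_injective[OF Z U ZU]
  have "T *\<^sub>v y - \<theta> r \<cdot>\<^sub>v y = (\<theta> s - \<theta> r) \<cdot>\<^sub>v (y - N $$ (r, r) \<cdot>\<^sub>v col U r)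
      \<longleftrightarrow> (\<forall>k<n. (\<theta> k - \<theta> r) * N $$ (k, r)
               = (\<theta> s - \<theta> r) * (N $$ (k, r) - (if k = r then N $$ (r, r) else 0)))"
    unfolding coords mult_mat_vec[OF U w, symmetric] inj_U[OF vec_carrier sw]
    unfolding w_def using N r by (simp add: vec_eq_iff)
  moreover have "(\<theta> s - \<theta> r) \<cdot>\<^sub>v (y - N $$ (r, r) \<cdot>\<^sub>v col U r) = 0\<^sub>v n
      \<longleftrightarrow> \<not> (\<exists>k<n. (\<theta> s - \<theta> r) * (N $$ (k, r) - (if k = r then N $$ (r, r) else 0)) \<noteq> 0)"
    unfolding coords mult_mat_vec[OF U w, symmetric] mult_mat_vec_eq_zero_iff[OF Z U ZU sw]
    unfolding w_def using N r by (simp add: vec_eq_iff)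
  ultimately show ?thesis
    using column_condition_iff[OF inj r s rs, of "\<lambda>k. N $$ (k, r)"] by blast
qed

section \<open>Tridiagonal matrices\<close>

text \<open>\<open>T y = x y\<close> is the three-term recurrence of the \<open>u\<^sub>i\<close>, and column \<open>j\<close> of \<open>T\<close> holds the
  coordinates of \<open>A v\<^sub>j\<close>.\<close>

definition tridiag_mat :: "nat \<Rightarrow> (nat \<Rightarrow> 'a) \<Rightarrow> (nat \<Rightarrow> 'a) \<Rightarrow> (nat \<Rightarrow> 'a) \<Rightarrow> 'a::zero mat" where
  "tridiag_mat n a b c = mat n n (\<lambda>(i, j).
     if j = i then a i else if j = Suc i then b i else if i = Suc j then c i else 0)"

lemma tridiag_mat_carrier [simp]: "tridiag_mat n a b c \<in> carrier_mat n n"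
  by (simp add: tridiag_mat_def)

lemma tridiag_mat_dim [simp]: "dim_row (tridiag_mat n a b c) = n" "dim_col (tridiag_mat n a b c) = n"
  by (simp_all add: tridiag_mat_def)

lemma tridiag_mult_vec_index:
  fixes a b c :: "nat \<Rightarrow> 'a::comm_ring_1"
  assumes y: "y \<in> carrier_vec n" and i: "i < n"
  shows "(tridiag_mat n a b c *\<^sub>v y) $ i =
    (if 0 < i then c i * y $ (i - 1) else 0) + a i * y $ i + (if Suc i < n then b i * y $ Suc i else 0)"
proof -
  have "(tridiag_mat n a b c *\<^sub>v y) $ i = (\<Sum>j<n. tridiag_mat n a b c $$ (i, j) * y $ j)"
    using y i by (simp add: scalar_prod_def atLeast0LessThan)
  also have "\<dots> = (\<Sum>j<n. (if j = i then a i * y $ j else 0) + (if j = Suc i then b i * y $ j else 0)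
              + (if j = i - 1 then (if 0 < i then c i * y $ j else 0) else 0))"
    using i by (intro sum.cong) (auto simp: tridiag_mat_def)
  also have "\<dots> = (if 0 < i then c i * y $ (i - 1) else 0) + a i * y $ i
                  + (if Suc i < n then b i * y $ Suc i else 0)"
    using i by (simp add: sum.distrib)
  finally show ?thesis .
qed

lemma col_mult_tridiag:
  fixes a b c :: "nat \<Rightarrow> 'a::comm_ring_1"
  assumes C: "C \<in> carrier_mat m n" and j: "j < n"
  shows "col (C * tridiag_mat n a b c) j =
    (if 0 < j then b (j - 1) \<cdot>\<^sub>v col C (j - 1) else 0\<^sub>v m) + a j \<cdot>\<^sub>v col C j
    + (if Suc j < n then c (Suc j) \<cdot>\<^sub>v col C (Suc j) else 0\<^sub>v m)"
proof (rule eq_vecI)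
  fix i assume "i < dim_vec ((if 0 < j then b (j - 1) \<cdot>\<^sub>v col C (j - 1) else 0\<^sub>v m) + a j \<cdot>\<^sub>v col C j
    + (if Suc j < n then c (Suc j) \<cdot>\<^sub>v col C (Suc j) else 0\<^sub>v m))"
  then have i: "i < m" using C by (simp split: if_splits)
  have "col (C * tridiag_mat n a b c) j $ i = (\<Sum>k<n. C $$ (i, k) * tridiag_mat n a b c $$ (k, j))"
    using C i j by (simp add: scalar_prod_def atLeast0LessThan)
  also have "\<dots> = (\<Sum>k<n. (if k = j then a j * C $$ (i, k) else 0)
              + (if k = j - 1 then (if 0 < j then b k * C $$ (i, k) else 0) else 0)
              + (if k = Suc j then c k * C $$ (i, k) else 0))"
    using j by (intro sum.cong) (auto simp: tridiag_mat_def)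
  also have "\<dots> = (if 0 < j then b (j - 1) * C $$ (i, j - 1) else 0) + a j * C $$ (i, j)
                  + (if Suc j < n then c (Suc j) * C $$ (i, Suc j) else 0)"
    using j by (simp add: sum.distrib)
  finally show "col (C * tridiag_mat n a b c) j $ i = ((if 0 < j then b (j - 1) \<cdot>\<^sub>v col C (j - 1) else 0\<^sub>v m)
    + a j \<cdot>\<^sub>v col C j + (if Suc j < n then c (Suc j) \<cdot>\<^sub>v col C (Suc j) else 0\<^sub>v m)) $ i"
    using C i j by auto
qed (use C in auto)

lemma tridiag_symmetrizable:
  fixes a b c :: "nat \<Rightarrow> 'a::field"
  assumes b: "\<And>i. Suc i < n \<Longrightarrow> b i \<noteq> 0" and c: "\<And>i. Suc i < n \<Longrightarrow> c (Suc i) \<noteq> 0"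
  obtains \<kappa> where "\<And>i. i < n \<Longrightarrow> \<kappa> i \<noteq> 0"
    "transpose_mat (tridiag_mat n a b c) * mat_diag n \<kappa> = mat_diag n \<kappa> * tridiag_mat n a b c"
proof
  define \<kappa> where "\<kappa> = rec_nat 1 (\<lambda>i k. k * b i / c (Suc i))"
  have \<kappa>_0: "\<kappa> 0 = 1" and \<kappa>_Suc: "\<kappa> (Suc i) = \<kappa> i * b i / c (Suc i)" for i
    by (simp_all add: \<kappa>_def)
  show \<kappa>_nonzero: "\<kappa> i \<noteq> 0" if "i < n" for i
    using that by (induction i) (simp_all add: \<kappa>_0 \<kappa>_Suc b c)
  let ?T = "tridiag_mat n a b c"
  show "transpose_mat ?T * mat_diag n \<kappa> = mat_diag n \<kappa> * ?T"
  proof (rule eq_matI)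
    fix i j assume "i < dim_row (mat_diag n \<kappa> * ?T)" "j < dim_col (mat_diag n \<kappa> * ?T)"
    then have i: "i < n" and j: "j < n" by (simp_all add: mat_diag_def)
    have "?T $$ (j, i) * \<kappa> j = \<kappa> i * ?T $$ (i, j)"
    proof -
      consider "j = Suc i" | "i = Suc j" | "i \<noteq> Suc j" "j \<noteq> Suc i" by blast
      then show ?thesis
      proof cases
        case 1 then show ?thesis using i j c[of i] by (simp add: tridiag_mat_def \<kappa>_Suc)
      next
        case 2 then show ?thesis using i j c[of j] by (simp add: tridiag_mat_def \<kappa>_Suc)
      qed (use i j in \<open>auto simp: tridiag_mat_def\<close>)
    qed
    then show "(transpose_mat ?T * mat_diag n \<kappa>) $$ (i, j) = (mat_diag n \<kappa> * ?T) $$ (i, j)"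
      using i j by (simp add: mat_diag_mult_left[of ?T n n] mat_diag_mult_right[of _ n n])
  qed (simp_all add: mat_diag_def)
qed

lemma upol_Suc_eval:
  fixes a b c :: "nat \<Rightarrow> 'a::field"
  assumes "i < d"
  shows "poly (upol a b c d (Suc i)) x =
    ((x - a i) * poly (upol a b c d i) x - (if i = 0 then 0 else c i * poly (upol a b c d (i - 1)) x)) / b i"
  using assms by (cases i) (simp_all add: uscale_def divide_inverse algebra_simps)

lemma tridiag_eigenvector_upol:
  fixes a b c :: "nat \<Rightarrow> 'a::field"
  assumes b: "\<And>i. i < d \<Longrightarrow> b i \<noteq> 0" and y: "y \<in> carrier_vec (Suc d)"
    and eigen: "tridiag_mat (Suc d) a b c *\<^sub>v y = x \<cdot>\<^sub>v y"
  shows "y = y $ 0 \<cdot>\<^sub>v vec (Suc d) (\<lambda>i. poly (upol a b c d i) x)"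
proof -
  have coord: "y $ i = y $ 0 * poly (upol a b c d i) x" if "i \<le> d" for i
    using that
  proof (induction i rule: less_induct)
    case (less i)
    show ?case
    proof (cases i)
      case (Suc j)
      then have j: "j < d" using less.prems by simp
      have "x * y $ j = (tridiag_mat (Suc d) a b c *\<^sub>v y) $ j"
        using y j by (simp only: eigen) simp
      also have "\<dots> = (if 0 < j then c j * y $ (j - 1) else 0) + a j * y $ j + b j * y $ Suc j"
        using tridiag_mult_vec_index[OF y, of j a b c] j by simp
      finally have "x * y $ j = (if 0 < j then c j * y $ (j - 1) else 0) + a j * y $ j + b j * y $ Suc j" .
      then have "y $ Suc j = ((x - a j) * y $ j - (if j = 0 then 0 else c j * y $ (j - 1))) / b j"
        using b[OF j] by (auto simp: field_simps)
      moreover have "y $ j = y $ 0 * poly (upol a b c d j) x"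
        and "y $ (j - 1) = y $ 0 * poly (upol a b c d (j - 1)) x"
        using less.IH[of j] less.IH[of "j - 1"] Suc j by simp_all
      ultimately show ?thesis
        using b[OF j] unfolding Suc upol_Suc_eval[OF j]
        by (cases "j = 0") (simp_all add: field_simps)
    qed simp
  qed
  show ?thesis
  proof (rule eq_vecI)
    fix i assume "i < dim_vec (y $ 0 \<cdot>\<^sub>v vec (Suc d) (\<lambda>i. poly (upol a b c d i) x))"
    then show "y $ i = (y $ 0 \<cdot>\<^sub>v vec (Suc d) (\<lambda>i. poly (upol a b c d i) x)) $ i"
      using coord[of i] by simp
  qed (use y in simp)
qed

lemma tridiag_recurrence_iff:
  fixes a b c f g :: "nat \<Rightarrow> 'a::comm_ring_1"
  assumes b: "b d = 0" and c: "c 0 = 0"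
  shows "tridiag_mat (Suc d) a b c *\<^sub>v vec (Suc d) f - x \<cdot>\<^sub>v vec (Suc d) f = vec (Suc d) g
    \<longleftrightarrow> (\<forall>i\<le>d. c i * f (i - 1) + a i * f i + b i * f (i + 1) - x * f i = g i)"
proof -
  have "(tridiag_mat (Suc d) a b c *\<^sub>v vec (Suc d) f - x \<cdot>\<^sub>v vec (Suc d) f) $ i
      = c i * f (i - 1) + a i * f i + b i * f (i + 1) - x * f i" if i: "i \<le> d" for i
    using tridiag_mult_vec_index[of "vec (Suc d) f" "Suc d" i a b c] i b c
    by (cases "i = 0"; cases "i = d") auto
  then show ?thesis by (auto simp: vec_eq_iff less_Suc_eq_le add.assoc)
qed

section \<open>The feasible-basis setting\<close>

locale feasible_basis =
  fixes d :: nat and Es :: "nat \<Rightarrow> 'a::field mat" and A :: "'a mat"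
    and a b c th :: "nat \<Rightarrow> 'a" and v :: "nat \<Rightarrow> 'a vec"
  assumes Es_carrier: "\<And>i. i \<le> d \<Longrightarrow> Es i \<in> carrier_mat (Suc d) (Suc d)"
    and Es_orth: "\<And>i j. i \<le> d \<Longrightarrow> j \<le> d \<Longrightarrow>
      Es i * Es j = (if i = j then Es i else 0\<^sub>m (Suc d) (Suc d))"
    and A_carrier: "A \<in> carrier_mat (Suc d) (Suc d)"
    and A_nonzero: "\<And>i j. i \<le> d \<Longrightarrow> j \<le> d \<Longrightarrow> \<bar>int i - int j\<bar> = 1 \<Longrightarrow>
      Es i * A * Es j \<noteq> 0\<^sub>m (Suc d) (Suc d)"
    and th_distinct: "inj_on th {..d}"
    and th_eig: "\<And>i. i \<le> d \<Longrightarrow> eigenvalue A (th i)"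
    and v_basis: "vectorspace.basis class_ring (module_vec TYPE('a) (Suc d)) (v ` {..d})"
    and v_inj: "inj_on v {..d}"
    and v_feasible: "\<And>i. i \<le> d \<Longrightarrow> v i \<in> (\<lambda>w. Es i *\<^sub>v w) ` carrier_vec (Suc d)"
    and A_v: "\<And>i. i \<le> d \<Longrightarrow> A *\<^sub>v v i =
      (if 0 < i then b (i - 1) \<cdot>\<^sub>v v (i - 1) else 0\<^sub>v (Suc d)) + a i \<cdot>\<^sub>v v i
      + (if i < d then c (i + 1) \<cdot>\<^sub>v v (i + 1) else 0\<^sub>v (Suc d))"
    and b_d: "b d = 0" and c_0: "c 0 = 0"
begin

abbreviation T :: "'a mat" where "T \<equiv> tridiag_mat (Suc d) a b c"

definition F :: "'a mat" where "F = mat_of_cols (Suc d) (map v [0..<Suc d])"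

definition U :: "'a mat" where "U = mat (Suc d) (Suc d) (\<lambda>(i, j). poly (upol a b c d i) (th j))"

lemma v_carrier: "i \<le> d \<Longrightarrow> v i \<in> carrier_vec (Suc d)"
  using v_feasible Es_carrier by fastforce

lemma Es_mult_v: "k \<le> d \<Longrightarrow> j \<le> d \<Longrightarrow> Es k *\<^sub>v v j = (if k = j then v j else 0\<^sub>v (Suc d))"
proof -
  assume k: "k \<le> d" and j: "j \<le> d"
  obtain w where w: "w \<in> carrier_vec (Suc d)" "v j = Es j *\<^sub>v w" using v_feasible[OF j] by auto
  have "Es k *\<^sub>v v j = (Es k * Es j) *\<^sub>v w" using w Es_carrier[OF k] Es_carrier[OF j] by simp
  then show ?thesis using Es_orth[OF k j] w by auto
qed

lemma F_carrier [simp]: "F \<in> carrier_mat (Suc d) (Suc d)"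
  unfolding F_def using mat_of_cols_carrier(1)[of "Suc d" "map v [0..<Suc d]"] by simp

lemma F_dim [simp]: "dim_row F = Suc d" "dim_col F = Suc d"
  using carrier_matD[OF F_carrier] by auto

lemma col_F: "j \<le> d \<Longrightarrow> col F j = v j"
  unfolding F_def using v_carrier by (simp del: upt_Suc)

lemma F_invertible:
  obtains W where "W \<in> carrier_mat (Suc d) (Suc d)" "W * F = 1\<^sub>m (Suc d)" "F * W = 1\<^sub>m (Suc d)"
proof (rule mat_inverse_if_kernel_trivial[OF F_carrier])
  interpret vec_space "TYPE('a)" "Suc d" .
  have cols: "cols F = map v [0..<Suc d]"
    unfolding F_def using v_carrier by (subst cols_mat_of_cols) (auto simp del: upt_Suc)
  have set_cols: "set (cols F) = v ` {..d}"
    unfolding cols by (auto simp del: upt_Suc)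
  have "distinct (cols F)"
    unfolding cols using v_inj by (simp add: distinct_map atLeast0LessThan lessThan_Suc_atMost del: upt_Suc)
  moreover have "lin_indpt (set (cols F))"
    using v_basis unfolding set_cols basis_def by simp
  ultimately show "y = 0\<^sub>v (Suc d)" if "y \<in> carrier_vec (Suc d)" "F *\<^sub>v y = 0\<^sub>v (Suc d)" for y
    using lin_depI[OF F_carrier that(1) _ that(2)] by blast
qed

lemma A_mult_F: "A * F = F * T"
proof (rule mat_col_eqI)
  fix j assume "j < dim_col (F * T)"
  then have j: "j \<le> d" by simp
  have "col (A * F) j = A *\<^sub>v v j" using col_mult2[OF A_carrier F_carrier] j by (simp add: col_F)
  also have "\<dots> = col (F * T) j"
    using col_mult_tridiag[OF F_carrier, of j a b c] A_v[OF j] j by (simp add: col_F)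
  finally show "col (A * F) j = col (F * T) j" .
qed (use A_carrier in simp_all)

lemma Es_mult_F:
  assumes k: "k \<le> d"
  shows "Es k * F = F * unit_diag_mat (Suc d) k"
proof -
  have "Es k *\<^sub>v col F j = (if j = k then 1 else 0) \<cdot>\<^sub>v col F j" if "j < Suc d" for j
    using that k v_carrier[of j] by (simp add: Es_mult_v col_F)
  then show ?thesis
    unfolding unit_diag_mat_def using mult_mat_diag_iff_cols[OF Es_carrier[OF k] F_carrier] by blast
qed

lemma conj_by_F:
  obtains W where "W \<in> carrier_mat (Suc d) (Suc d)" "W * F = 1\<^sub>m (Suc d)" "F * W = 1\<^sub>m (Suc d)" "A = F * T * W"
    "\<And>k. k \<le> d \<Longrightarrow> Es k = F * unit_diag_mat (Suc d) k * W"
proof -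
  obtain W where W: "W \<in> carrier_mat (Suc d) (Suc d)" "W * F = 1\<^sub>m (Suc d)" "F * W = 1\<^sub>m (Suc d)"
    using F_invertible .
  show ?thesis
  proof (rule that[OF W])
    show "A = F * T * W"
      using mat_eq_conj_if_mult_eq[OF A_carrier F_carrier _ W(1) W(3) A_mult_F] by simp
    show "Es k = F * unit_diag_mat (Suc d) k * W" if "k \<le> d" for k
      using mat_eq_conj_if_mult_eq[OF Es_carrier[OF that] F_carrier _ W(1) W(3) Es_mult_F[OF that]] by simp
  qed
qed

lemma Es_A_Es_eq_zero_iff:
  assumes i: "i \<le> d" and j: "j \<le> d"
  shows "Es i * A * Es j = 0\<^sub>m (Suc d) (Suc d) \<longleftrightarrow> T $$ (i, j) = 0"
proof -
  obtain W where W: "W \<in> carrier_mat (Suc d) (Suc d)" "W * F = 1\<^sub>m (Suc d)" "A = F * T * W"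
    and Es: "\<And>k. k \<le> d \<Longrightarrow> Es k = F * unit_diag_mat (Suc d) k * W"
    using conj_by_F by blast
  show ?thesis
    using conj_unit_diag_sandwich_eq_zero_iff[OF F_carrier W(1) _ W(2)] i j by (simp add: Es W(3))
qed

lemma b_nonzero: "i < d \<Longrightarrow> b i \<noteq> 0"
  using Es_A_Es_eq_zero_iff[of i "Suc i"] A_nonzero[of i "Suc i"] by (simp add: tridiag_mat_def)

lemma c_nonzero: "i < d \<Longrightarrow> c (Suc i) \<noteq> 0"
  using Es_A_Es_eq_zero_iff[of "Suc i" i] A_nonzero[of "Suc i" i] by (simp add: tridiag_mat_def)

lemma T_eigenvalue: "j \<le> d \<Longrightarrow> eigenvalue T (th j)"
proof -
  assume j: "j \<le> d"
  obtain W where W: "W \<in> carrier_mat (Suc d) (Suc d)" "W * F = 1\<^sub>m (Suc d)" "F * W = 1\<^sub>m (Suc d)" "A = F * T * W"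
    using conj_by_F by blast
  have "similar_mat A T"
    using W A_carrier by (intro similar_matI[of A T F W "Suc d"]) auto
  then have "char_poly A = char_poly T" by (rule char_poly_similar)
  then show ?thesis
    using th_eig[OF j] eigenvalue_root_char_poly[OF A_carrier]
      eigenvalue_root_char_poly[OF tridiag_mat_carrier[of "Suc d" a b c]] by simp
qed

lemma U_carrier [simp]: "U \<in> carrier_mat (Suc d) (Suc d)"
  by (simp add: U_def)

lemma U_dim [simp]: "dim_row U = Suc d" "dim_col U = Suc d"
  by (simp_all add: U_def)

lemma col_U: "j < Suc d \<Longrightarrow> col U j = vec (Suc d) (\<lambda>i. poly (upol a b c d i) (th j))"
  by (auto simp: U_def)

lemma col_U_nonzero: "j < Suc d \<Longrightarrow> col U j \<noteq> 0\<^sub>v (Suc d)"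
proof
  assume "j < Suc d" "col U j = 0\<^sub>v (Suc d)"
  then have "col U j $ 0 = 0" by simp
  then show False using col_U[OF \<open>j < Suc d\<close>] by simp
qed

lemma T_mult_col_U:
  assumes j: "j \<le> d"
  shows "T *\<^sub>v col U j = th j \<cdot>\<^sub>v col U j"
proof -
  obtain y where y: "y \<in> carrier_vec (Suc d)" "y \<noteq> 0\<^sub>v (Suc d)" and Ty: "T *\<^sub>v y = th j \<cdot>\<^sub>v y"
    using T_eigenvalue[OF j] unfolding eigenvalue_def eigenvector_def by auto
  have y_eq: "y = y $ 0 \<cdot>\<^sub>v col U j"
    using tridiag_eigenvector_upol[OF b_nonzero y(1) Ty] j by (simp add: col_U)
  then have "y $ 0 \<noteq> 0" using y j by (metis col_carrier_vec U_carrier le_imp_less_Suc zero_smult_vec)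
  then have "col U j = inverse (y $ 0) \<cdot>\<^sub>v y"
    by (subst y_eq) (simp add: smult_smult_assoc)
  then show ?thesis
    using y Ty by (simp add: mult_mat_vec[of _ "Suc d" "Suc d"] smult_smult_assoc mult.commute)
qed

lemma T_mult_U: "T * U = U * mat_diag (Suc d) th"
  using mult_mat_diag_iff_cols[OF tridiag_mat_carrier U_carrier] T_mult_col_U by simp

definition dual_mat :: "(nat \<Rightarrow> 'a) \<Rightarrow> 'a mat" where
  "dual_mat ths = foldr (\<lambda>i M. ths i \<cdot>\<^sub>m Es i + M) [0..<Suc d] (0\<^sub>m (Suc d) (Suc d))"

lemma Es_combination_carrier:
  "set xs \<subseteq> {..d} \<Longrightarrow> foldr (\<lambda>i M. ths i \<cdot>\<^sub>m Es i + M) xs (0\<^sub>m (Suc d) (Suc d)) \<in> carrier_mat (Suc d) (Suc d)"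
  by (induction xs) (auto intro!: add_carrier_mat smult_carrier_mat Es_carrier)

lemma dual_mat_carrier [simp]: "dual_mat ths \<in> carrier_mat (Suc d) (Suc d)"
  unfolding dual_mat_def by (rule Es_combination_carrier) auto

lemma Es_combination_mult_v:
  assumes "set xs \<subseteq> {..d}" "distinct xs" "j \<le> d"
  shows "foldr (\<lambda>i M. ths i \<cdot>\<^sub>m Es i + M) xs (0\<^sub>m (Suc d) (Suc d)) *\<^sub>v v j
    = (if j \<in> set xs then ths j \<cdot>\<^sub>v v j else 0\<^sub>v (Suc d))"
  using assms
proof (induction xs)
  case Nil
  then show ?case using v_carrier[OF Nil(3)] by (intro eq_vecI) auto
next
  case (Cons i xs)
  let ?M = "foldr (\<lambda>i M. ths i \<cdot>\<^sub>m Es i + M) xs (0\<^sub>m (Suc d) (Suc d))"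
  have i: "i \<le> d" and M: "?M \<in> carrier_mat (Suc d) (Suc d)"
    and Mv: "?M *\<^sub>v v j = (if j \<in> set xs then ths j \<cdot>\<^sub>v v j else 0\<^sub>v (Suc d))"
    using Cons Es_combination_carrier[of xs ths] by auto
  have "(ths i \<cdot>\<^sub>m Es i + ?M) *\<^sub>v v j = ths i \<cdot>\<^sub>v (Es i *\<^sub>v v j) + ?M *\<^sub>v v j"
    using Es_carrier[OF i] M v_carrier[OF Cons.prems(3)]
    by (simp add: add_mult_distrib_mat_vec[of _ "Suc d" "Suc d"] smult_mat_mult_vec[of _ "Suc d" "Suc d"])
  then show ?case
    using Mv Es_mult_v[OF i Cons.prems(3)] Cons.prems v_carrier[OF Cons.prems(3)] by auto
qed

lemma dual_mat_mult_F: "dual_mat ths * F = F * mat_diag (Suc d) ths"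
proof -
  have set: "set [0..<Suc d] \<subseteq> {..d}" by auto
  have "dual_mat ths *\<^sub>v col F j = ths j \<cdot>\<^sub>v col F j" if "j < Suc d" for j
    using Es_combination_mult_v[OF set distinct_upt, of j ths] that
    unfolding dual_mat_def by (simp add: col_F del: upt_Suc)
  then show ?thesis using mult_mat_diag_iff_cols[OF dual_mat_carrier F_carrier] by blast
qed

lemma A_mult_FU: "A * (F * U) = (F * U) * mat_diag (Suc d) th"
proof -
  interpret matrix_ring "Suc d" "TYPE('a)" .
  show ?thesis
    using A_carrier by (simp flip: m_assoc add: A_mult_F) (simp add: m_assoc T_mult_U)
qed

lemma FU_invertible:
  obtains Q where "Q \<in> carrier_mat (Suc d) (Suc d)" "Q * (F * U) = 1\<^sub>m (Suc d)" "(F * U) * Q = 1\<^sub>m (Suc d)"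
proof -
  obtain W where W: "W \<in> carrier_mat (Suc d) (Suc d)" and WF: "W * F = 1\<^sub>m (Suc d)"
    using F_invertible by blast
  have "col (F * U) j \<noteq> 0\<^sub>v (Suc d)" if "j \<le> d" for j
  proof
    assume "col (F * U) j = 0\<^sub>v (Suc d)"
    then have "F *\<^sub>v col U j = 0\<^sub>v (Suc d)"
      using that col_mult2[OF F_carrier U_carrier, of j] by simp
    then show False
      using mult_mat_vec_eq_zero_iff[OF W F_carrier WF col_dim[of U j, unfolded U_dim]]
        col_U_nonzero[of j] that by simp
  qed
  then show ?thesis
    using eigen_cols_invertible[OF A_carrier mult_carrier_mat[OF F_carrier U_carrier] A_mult_FU th_distinct]
      that by blast
qed

definition U_inv :: "'a mat" where
  "U_inv = (SOME Z. Z \<in> carrier_mat (Suc d) (Suc d) \<and> Z * U = 1\<^sub>m (Suc d))"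

lemma U_inv: "U_inv \<in> carrier_mat (Suc d) (Suc d)" "U_inv * U = 1\<^sub>m (Suc d)" "U * U_inv = 1\<^sub>m (Suc d)"
proof -
  interpret matrix_ring "Suc d" "TYPE('a)" .
  obtain Q where Q: "Q \<in> carrier_mat (Suc d) (Suc d)" "Q * (F * U) = 1\<^sub>m (Suc d)"
    using FU_invertible by blast
  have "Q * F \<in> carrier_mat (Suc d) (Suc d) \<and> Q * F * U = 1\<^sub>m (Suc d)"
    using Q by (simp add: m_assoc)
  then have "U_inv \<in> carrier_mat (Suc d) (Suc d) \<and> U_inv * U = 1\<^sub>m (Suc d)"
    unfolding U_inv_def by (rule someI)
  then show "U_inv \<in> carrier_mat (Suc d) (Suc d)" "U_inv * U = 1\<^sub>m (Suc d)" "U * U_inv = 1\<^sub>m (Suc d)"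
    using mat_mult_left_right_inverse[OF _ U_carrier] by auto
qed

text \<open>The matrix of \<open>A\<^sup>*\<close> with respect to the eigenbasis \<open>F U\<close> of \<open>A\<close>.\<close>

definition dual_coeff :: "(nat \<Rightarrow> 'a) \<Rightarrow> 'a mat" where
  "dual_coeff ths = U_inv * mat_diag (Suc d) ths * U"

lemma dual_coeff_carrier [simp]: "dual_coeff ths \<in> carrier_mat (Suc d) (Suc d)"
  unfolding dual_coeff_def using U_inv(1) by (auto intro!: mult_carrier_mat)

lemma conj_by_FU:
  obtains P Q where "P \<in> carrier_mat (Suc d) (Suc d)" "Q \<in> carrier_mat (Suc d) (Suc d)"
    "Q * P = 1\<^sub>m (Suc d)" "\<And>k. k \<le> d \<Longrightarrow> prim_idem (Suc d) d A th k = P * unit_diag_mat (Suc d) k * Q"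
    "dual_mat ths = P * dual_coeff ths * Q"
proof -
  interpret matrix_ring "Suc d" "TYPE('a)" .
  obtain W where W: "W \<in> carrier_mat (Suc d) (Suc d)" "F * W = 1\<^sub>m (Suc d)"
    using F_invertible by blast
  obtain Q where Q: "Q \<in> carrier_mat (Suc d) (Suc d)" "Q * (F * U) = 1\<^sub>m (Suc d)" "(F * U) * Q = 1\<^sub>m (Suc d)"
    using FU_invertible by blast
  have UU_inv: "U * (U_inv * M) = M" if "M \<in> carrier_mat (Suc d) (Suc d)" for M
    using that U_inv by (simp flip: m_assoc)
  have "Q * F = (Q * (F * U)) * U_inv"
    using Q(1) U_inv(1) by (simp add: m_assoc U_inv(3))
  then have QF: "Q * F = U_inv"
    using Q(2) U_inv(1) by simp
  have "Q = Q * F * W" using Q(1) W by (simp add: m_assoc)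
  then have Q_eq: "Q = U_inv * W" unfolding QF .
  have E: "prim_idem (Suc d) d A th k = (F * U) * unit_diag_mat (Suc d) k * Q" if "k \<le> d" for k
    using mat_eq_conj_if_mult_eq[OF prim_idem_carrier[OF A_carrier] _ _ Q(1) Q(3)
        prim_idem_mult_eigen_cols[OF A_carrier _ A_mult_FU th_distinct that]] by simp
  have "dual_mat ths = F * mat_diag (Suc d) ths * W"
    using mat_eq_conj_if_mult_eq[OF dual_mat_carrier F_carrier _ W dual_mat_mult_F] by simp
  also have "\<dots> = (F * U) * dual_coeff ths * Q"
    unfolding dual_coeff_def Q_eq using U_inv W by (simp add: m_assoc UU_inv)
  finally show ?thesis using that[of "F * U" Q] Q E by simp
qed

lemma dual_coeff_zero_iff_sym:
  assumes "i \<le> d" "j \<le> d"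
  shows "dual_coeff ths $$ (i, j) = 0 \<longleftrightarrow> dual_coeff ths $$ (j, i) = 0"
proof -
  obtain \<kappa> where \<kappa>: "\<And>i. i < Suc d \<Longrightarrow> \<kappa> i \<noteq> 0"
    and TK: "transpose_mat T * mat_diag (Suc d) \<kappa> = mat_diag (Suc d) \<kappa> * T"
    using tridiag_symmetrizable[of "Suc d" b c a] b_nonzero c_nonzero by auto
  have inj: "inj_on th {..<Suc d}" using th_distinct by (simp add: lessThan_Suc_atMost)
  show ?thesis
    unfolding dual_coeff_def using assms
    by (intro conj_diag_zero_pattern_symmetric[OF tridiag_mat_carrier U_carrier U_inv(1,2) T_mult_U
          inj TK \<kappa>]) auto
qed

lemma E_dual_E_eq_zero_iff:
  assumes i: "i \<le> d" and j: "j \<le> d"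
  shows "prim_idem (Suc d) d A th i * dual_mat ths * prim_idem (Suc d) d A th j = 0\<^sub>m (Suc d) (Suc d)
    \<longleftrightarrow> dual_coeff ths $$ (j, i) = 0"
proof -
  obtain P Q where P: "P \<in> carrier_mat (Suc d) (Suc d)" and Q: "Q \<in> carrier_mat (Suc d) (Suc d)"
    and QP: "Q * P = 1\<^sub>m (Suc d)"
    and E: "\<And>k. k \<le> d \<Longrightarrow> prim_idem (Suc d) d A th k = P * unit_diag_mat (Suc d) k * Q"
    and dual: "dual_mat ths = P * dual_coeff ths * Q"
    using conj_by_FU by blast
  show ?thesis
    unfolding E[OF i] E[OF j] dual dual_coeff_zero_iff_sym[OF j i]
    using conj_unit_diag_sandwich_eq_zero_iff[OF P Q dual_coeff_carrier QP] i j by simp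
qed

lemma mtrace_E_dual:
  assumes r: "r \<le> d"
  shows "mtrace (prim_idem (Suc d) d A th r * dual_mat ths) = dual_coeff ths $$ (r, r)"
proof -
  obtain P Q where P: "P \<in> carrier_mat (Suc d) (Suc d)" and Q: "Q \<in> carrier_mat (Suc d) (Suc d)"
    and QP: "Q * P = 1\<^sub>m (Suc d)"
    and E: "\<And>k. k \<le> d \<Longrightarrow> prim_idem (Suc d) d A th k = P * unit_diag_mat (Suc d) k * Q"
    and dual: "dual_mat ths = P * dual_coeff ths * Q"
    using conj_by_FU by blast
  show ?thesis
    unfolding E[OF r] dual using mtrace_conj_unit_diag_mult[OF P Q dual_coeff_carrier QP] r by simp
qed

lemma recurrence_condition_iff_mult_vec:
  fixes ths :: "nat \<Rightarrow> 'a"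
  assumes r: "r \<le> d"
  defines "\<alpha> \<equiv> \<lambda>i. poly (upol a b c d i) (th r)" and "y \<equiv> mat_diag (Suc d) ths *\<^sub>v col U r"
  shows "(\<forall>i\<le>d. c i * ths (i - 1) * \<alpha> (i - 1) + a i * ths i * \<alpha> i + b i * ths (i + 1) * \<alpha> (i + 1)
              - th r * ths i * \<alpha> i = \<kappa> * (ths i - \<mu>) * \<alpha> i)
      \<longleftrightarrow> T *\<^sub>v y - th r \<cdot>\<^sub>v y = \<kappa> \<cdot>\<^sub>v (y - \<mu> \<cdot>\<^sub>v col U r)"
    and "(\<exists>i\<le>d. \<kappa> * (ths i - \<mu>) * \<alpha> i \<noteq> 0) \<longleftrightarrow> \<kappa> \<cdot>\<^sub>v (y - \<mu> \<cdot>\<^sub>v col U r) \<noteq> 0\<^sub>v (Suc d)"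
proof -
  have u: "col U r = vec (Suc d) \<alpha>" unfolding \<alpha>_def using r by (simp add: col_U)
  have y: "y = vec (Suc d) (\<lambda>i. ths i * \<alpha> i)"
    unfolding y_def u
    by (auto simp: mat_diag_def scalar_prod_def if_distrib if_distribR cong: if_cong)
  have rhs: "\<kappa> \<cdot>\<^sub>v (y - \<mu> \<cdot>\<^sub>v col U r) = vec (Suc d) (\<lambda>i. \<kappa> * (ths i - \<mu>) * \<alpha> i)"
    unfolding y u by (auto simp: algebra_simps)
  show "(\<forall>i\<le>d. c i * ths (i - 1) * \<alpha> (i - 1) + a i * ths i * \<alpha> i + b i * ths (i + 1) * \<alpha> (i + 1)
              - th r * ths i * \<alpha> i = \<kappa> * (ths i - \<mu>) * \<alpha> i)
      \<longleftrightarrow> T *\<^sub>v y - th r \<cdot>\<^sub>v y = \<kappa> \<cdot>\<^sub>v (y - \<mu> \<cdot>\<^sub>v col U r)"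
    unfolding rhs unfolding y tridiag_recurrence_iff[where b = b and c = c and d = d, OF b_d c_0]
    by (simp add: ac_simps)
  show "(\<exists>i\<le>d. \<kappa> * (ths i - \<mu>) * \<alpha> i \<noteq> 0) \<longleftrightarrow> \<kappa> \<cdot>\<^sub>v (y - \<mu> \<cdot>\<^sub>v col U r) \<noteq> 0\<^sub>v (Suc d)"
    unfolding rhs by (auto simp: vec_eq_iff less_Suc_eq_le)
qed

lemma recurrence_condition_iff_dual_coeff:
  fixes ths :: "nat \<Rightarrow> 'a"
  assumes r: "r \<le> d" and s: "s \<le> d" and rs: "r \<noteq> s"
  defines "\<alpha> \<equiv> \<lambda>i. poly (upol a b c d i) (th r)" and "N \<equiv> dual_coeff ths"
  shows "(\<forall>i\<le>d. c i * ths (i - 1) * \<alpha> (i - 1) + a i * ths i * \<alpha> i + b i * ths (i + 1) * \<alpha> (i + 1)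
              - th r * ths i * \<alpha> i = (th s - th r) * (ths i - N $$ (r, r)) * \<alpha> i)
      \<and> (\<exists>i\<le>d. (th s - th r) * (ths i - N $$ (r, r)) * \<alpha> i \<noteq> 0)
    \<longleftrightarrow> N $$ (s, r) \<noteq> 0 \<and> (\<forall>k\<le>d. k \<noteq> r \<longrightarrow> k \<noteq> s \<longrightarrow> N $$ (k, r) = 0)"
proof -
  have inj: "inj_on th {..<Suc d}" using th_distinct by (simp add: lessThan_Suc_atMost)
  show ?thesis
    unfolding \<alpha>_def N_def recurrence_condition_iff_mult_vec[OF r] dual_coeff_def
    using conj_diag_column_condition[OF tridiag_mat_carrier U_carrier U_inv(1,2) T_mult_U inj _ _ rs] r s
    by (simp add: less_Suc_eq_le)
qed

end

theorem proposition7p13: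
  fixes d :: nat
    and Es :: "nat \<Rightarrow> 'a::field mat"
    and A :: "'a mat"
    and th ths :: "nat \<Rightarrow> 'a"
    and v :: "nat \<Rightarrow> 'a vec"
    and b c :: "nat \<Rightarrow> 'a"
    and r s :: nat
  defines "n \<equiv> Suc d"
  defines "E \<equiv> prim_idem n d A th"
  defines "Astar \<equiv> foldr (\<lambda>i M. ths i \<cdot>\<^sub>m Es i + M) [0..<Suc d] (0\<^sub>m n n)"
  defines "astar \<equiv> (\<lambda>i. mtrace (E i * Astar))"
  defines "adj \<equiv> (\<lambda>i j. i \<noteq> j \<and> E i * Astar * E j \<noteq> 0\<^sub>m n n)"
  defines "a \<equiv> (\<lambda>i. mtrace (Es i * A))"
  defines "\<alpha> \<equiv> (\<lambda>i. poly (upol a b c d i) (th r))"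
  assumes d1: "1 \<le> d"
    and Es_carrier: "\<And>i. i \<le> d \<Longrightarrow> Es i \<in> carrier_mat n n"
    and Es_orth: "\<And>i j. i \<le> d \<Longrightarrow> j \<le> d \<Longrightarrow> Es i * Es j = (if i = j then Es i else 0\<^sub>m n n)"
    and Es_rank: "\<And>i. i \<le> d \<Longrightarrow> vec_space.rank n (Es i) = 1"
    and A_carrier: "A \<in> carrier_mat n n"
    and A_zero: "\<And>i j. i \<le> d \<Longrightarrow> j \<le> d \<Longrightarrow> 1 < \<bar>int i - int j\<bar> \<Longrightarrow> Es i * A * Es j = 0\<^sub>m n n"
    and A_nonzero: "\<And>i j. i \<le> d \<Longrightarrow> j \<le> d \<Longrightarrow> \<bar>int i - int j\<bar> = 1 \<Longrightarrow> Es i * A * Es j \<noteq> 0\<^sub>m n n"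
    and th_distinct: "inj_on th {..d}"
    and th_eig: "\<And>i. i \<le> d \<Longrightarrow> eigenvalue A (th i)"
    and v_basis: "vectorspace.basis class_ring (module_vec TYPE('a) n) (v ` {..d})"
    and v_inj: "inj_on v {..d}"
    and v_feasible: "\<And>i. i \<le> d \<Longrightarrow> v i \<in> (\<lambda>w. Es i *\<^sub>v w) ` carrier_vec n"
    and A_v: "\<And>i. i \<le> d \<Longrightarrow> A *\<^sub>v v i =
                 (if 0 < i then b (i - 1) \<cdot>\<^sub>v v (i - 1) else 0\<^sub>v n) + a i \<cdot>\<^sub>v v i
                 + (if i < d then c (i + 1) \<cdot>\<^sub>v v (i + 1) else 0\<^sub>v n)"
    and b_d: "b d = 0"
    and c_0: "c 0 = 0"
    and rs: "r \<le> d" "s \<le> d" "r \<noteq> s"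
  shows "(adj r s \<and> (\<forall>j\<le>d. adj r j \<longrightarrow> j = s)) \<longleftrightarrow>
         ((\<forall>i\<le>d. c i * ths (i - 1) * \<alpha> (i - 1) + a i * ths i * \<alpha> i
                    + b i * ths (i + 1) * \<alpha> (i + 1) - th r * ths i * \<alpha> i
                  = (th s - th r) * (ths i - astar r) * \<alpha> i)
          \<and> (\<exists>i\<le>d. (th s - th r) * (ths i - astar r) * \<alpha> i \<noteq> 0))"
proof -
  interpret feasible_basis d Es A a b c th v
    using Es_carrier Es_orth A_carrier A_nonzero th_distinct th_eig v_basis v_inj v_feasible A_v b_d c_0
    unfolding n_def by unfold_locales
  have E: "E = prim_idem (Suc d) d A th" and Astar: "Astar = dual_mat ths"
    unfolding E_def Astar_def n_def dual_mat_def by simp_all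
  have adj_iff: "adj r j \<longleftrightarrow> j \<noteq> r \<and> dual_coeff ths $$ (j, r) \<noteq> 0" if "j \<le> d" for j
    unfolding adj_def E Astar n_def using E_dual_E_eq_zero_iff[OF rs(1) that] by auto
  have "astar r = dual_coeff ths $$ (r, r)"
    unfolding astar_def E Astar by (rule mtrace_E_dual[OF rs(1)])
  then show ?thesis
    unfolding \<alpha>_def using recurrence_condition_iff_dual_coeff[OF rs] adj_iff rs by auto
qed

end
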